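(* Consider the resource sharing problem and the Estimation phase of the ENE algorithm described in the context. Let $\mathbf m^{*j}=\arg\max_{\mathbf m}\sum_{n=1}^N\hat U^j_{n,m_n,\ell_n(\mathbf m)}$ be the allocation maximizing the estimated utilities of epoch $j$, and let $E^{j,1}$ be the event $\mathbf m^{*j}\ne\mathbf m^*$. Then $\mathbb P(E^{j,1})=O\left(\exp(-j^{1.4})\right)$ as $j\to\infty$.
   Context: Model. $N$ agents share $M$ resources, with $N\gg M$. Time is slotted. At each time agent $n$ chooses one resource in $\{1,\dots,M\}$; an allocation is $\mathbf m=(m_1,\dots,m_N)$. The load of agent $n$ under $\mathbf m$ is $\ell_n(\mathbf m)=\sum_{k=1}^N\mathbb 1(m_k=m_n)$. Each agent $n$ and resource $m$ has a utility $U_{n,m,1}\in[0,U_{\max}]$, constant in time, drawn once independently from continuous distributions (so the optimal allocation is unique with probability 1). Write $U_{n,m,\ell}=U_{n,m,1}/\ell$. The utility of agent $n$ under $\mathbf m$ is $U_n(\mathbf m)=U_{n,m_n,1}/\ell_n(\mathbf m)$, the welfare is $W(\mathbf m)=\sum_n U_n(\mathbf m)$, and $\mathbf m^*=\arg\max_{\mathbf m}W(\mathbf m)$. An agent accessing a resource observes the reward $U_n(\mathbf m)+\nu$, where the noise $\nu$ is zero-mean sub-Gaussian with variance proxy $b$, i.i.d. over time and agents. Estimation phase of the ENE algorithm. Time is divided into epochs $j=1,2,\dots$; epoch $j$ begins with an Estimation phase of $M+1$ blocks of $j$ time steps. In block $k\le M$ every agent accesses resource $k$ (load $N$), and agent $n$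 sets $\hat U^j_{n,k,N}$ to be the average of all its rewards in block $k$ of the Estimation phase over epochs $1,\dots,j$ (that is $j(j+1)/2$ samples). In block $M+1$, at each time step each agent independently accesses resource 1 with probability $1/2$ and otherwise no resource; $\bar r_n^{j,1,M+1}$ is the average of agent $n$'s rewards over all time steps of block $M+1$ in epochs $1,\dots,j$ in which it accessed resource 1. Agent $n$ estimates the number of agents by $\hat N_n^j=\frac{1}{\ln(1/2)}\ln\left(1-\frac{\bar r_n^{j,1,M+1}}{2\hat U^j_{n,1,N}}\right)$ (rounded to the nearest integer), and sets $\hat U^j_{n,m,\ell}=\frac1\ell\hat N_n^j\hat U^j_{n,m,N}$ for all $m$ and $1\le\ell\le N$. *)

theory Defs
  imports "HOL-Probability.Probability" "HOL-Library.Landau_Symbols"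
begin

text \<open>Agents are 1..N, resources 1..M. U n m is the single-occupancy utility U_{n,m,1}.\<close>

definition load :: "nat \<Rightarrow> (nat \<Rightarrow> nat) \<Rightarrow> nat \<Rightarrow> nat" where
  "load N m n = card {k \<in> {1..N}. m k = m n}"

definition welfare :: "nat \<Rightarrow> (nat \<Rightarrow> nat \<Rightarrow> real) \<Rightarrow> (nat \<Rightarrow> nat) \<Rightarrow> real" where
  "welfare N U m = (\<Sum>n = 1..N. U n (m n) / real (load N m n))"

definition allocs :: "nat \<Rightarrow> nat \<Rightarrow> (nat \<Rightarrow> nat) set" where
  "allocs N M = {1..N} \<rightarrow>\<^sub>E {1..M}"

definition subgaussian :: "'a measure \<Rightarrow> ('a \<Rightarrow> real) \<Rightarrow> real \<Rightarrow> bool" where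
  "subgaussian P X b \<longleftrightarrow> X \<in> borel_measurable P \<and> integrable P X \<and>
     (\<integral>\<omega>. X \<omega> \<partial>P) = 0 \<and>
     (\<forall>l::real. integrable P (\<lambda>\<omega>. exp (l * X \<omega>)) \<and>
        (\<integral>\<omega>. exp (l * X \<omega>) \<partial>P) \<le> exp (l\<^sup>2 * b / 2))"

text \<open>Noise nu (i,k,s,n): noise of agent n at step s (0 \<le> s < i) of block k of the
  Estimation phase of epoch i.  Coin c (i,s,n): whether agent n accesses resource 1
  at step s of block M+1 of epoch i.\<close>
definition est_reward ::
  "nat \<Rightarrow> nat \<Rightarrow> (nat \<Rightarrow> nat \<Rightarrow> real) \<Rightarrow> (nat \<times> nat \<times> nat \<times> nat \<Rightarrow> 'a \<Rightarrow> real)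
   \<Rightarrow> (nat \<times> nat \<times> nat \<Rightarrow> 'a \<Rightarrow> bool) \<Rightarrow> nat \<Rightarrow> nat \<Rightarrow> nat \<Rightarrow> nat \<Rightarrow> 'a \<Rightarrow> real" where
  "est_reward N M U nu c i k s n \<omega> =
     (if k \<le> M then U n k / real N + nu (i, k, s, n) \<omega>
      else U n 1 / real (card {k' \<in> {1..N}. c (i, s, k') \<omega>}) + nu (i, k, s, n) \<omega>)"

definition UhatN ::
  "nat \<Rightarrow> nat \<Rightarrow> (nat \<Rightarrow> nat \<Rightarrow> real) \<Rightarrow> (nat \<times> nat \<times> nat \<times> nat \<Rightarrow> 'a \<Rightarrow> real)
   \<Rightarrow> (nat \<times> nat \<times> nat \<Rightarrow> 'a \<Rightarrow> bool) \<Rightarrow> nat \<Rightarrow> nat \<Rightarrow> nat \<Rightarrow> 'a \<Rightarrow> real" where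
  "UhatN N M U nu c j n k \<omega> =
     (\<Sum>i = 1..j. \<Sum>s < i. est_reward N M U nu c i k s n \<omega>) / (real j * (real j + 1) / 2)"

definition rbar ::
  "nat \<Rightarrow> nat \<Rightarrow> (nat \<Rightarrow> nat \<Rightarrow> real) \<Rightarrow> (nat \<times> nat \<times> nat \<times> nat \<Rightarrow> 'a \<Rightarrow> real)
   \<Rightarrow> (nat \<times> nat \<times> nat \<Rightarrow> 'a \<Rightarrow> bool) \<Rightarrow> nat \<Rightarrow> nat \<Rightarrow> 'a \<Rightarrow> real" where
  "rbar N M U nu c j n \<omega> =
     (\<Sum>(i, s) \<in> {(i, s). i \<in> {1..j} \<and> s < i \<and> c (i, s, n) \<omega>}.
         est_reward N M U nu c i (M + 1) s n \<omega>)
     / real (card {(i, s). i \<in> {1..j} \<and> s < i \<and> c (i, s, n) \<omega>})"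

definition Nhat ::
  "nat \<Rightarrow> nat \<Rightarrow> (nat \<Rightarrow> nat \<Rightarrow> real) \<Rightarrow> (nat \<times> nat \<times> nat \<times> nat \<Rightarrow> 'a \<Rightarrow> real)
   \<Rightarrow> (nat \<times> nat \<times> nat \<Rightarrow> 'a \<Rightarrow> bool) \<Rightarrow> nat \<Rightarrow> nat \<Rightarrow> 'a \<Rightarrow> int" where
  "Nhat N M U nu c j n \<omega> =
     round (ln (1 - rbar N M U nu c j n \<omega> / (2 * UhatN N M U nu c j n 1 \<omega>)) / ln (1 / 2))"

definition Uhat ::
  "nat \<Rightarrow> nat \<Rightarrow> (nat \<Rightarrow> nat \<Rightarrow> real) \<Rightarrow> (nat \<times> nat \<times> nat \<times> nat \<Rightarrow> 'a \<Rightarrow> real)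
   \<Rightarrow> (nat \<times> nat \<times> nat \<Rightarrow> 'a \<Rightarrow> bool) \<Rightarrow> nat \<Rightarrow> nat \<Rightarrow> nat \<Rightarrow> nat \<Rightarrow> 'a \<Rightarrow> real" where
  "Uhat N M U nu c j n m l \<omega> =
     real_of_int (Nhat N M U nu c j n \<omega>) * UhatN N M U nu c j n m \<omega> / real l"

definition est_welfare ::
  "nat \<Rightarrow> nat \<Rightarrow> (nat \<Rightarrow> nat \<Rightarrow> real) \<Rightarrow> (nat \<times> nat \<times> nat \<times> nat \<Rightarrow> 'a \<Rightarrow> real)
   \<Rightarrow> (nat \<times> nat \<times> nat \<Rightarrow> 'a \<Rightarrow> bool) \<Rightarrow> nat \<Rightarrow> 'a \<Rightarrow> (nat \<Rightarrow> nat) \<Rightarrow> real" where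
  "est_welfare N M U nu c j \<omega> m = (\<Sum>n = 1..N. Uhat N M U nu c j n (m n) (load N m n) \<omega>)"

end

theory Submission
  imports Defs "HOL-Real_Asymp.Real_Asymp"
begin

text \<open>In block \<open>k \<le> M\<close> every reward is \<open>U n k / N\<close> plus noise, so \<open>UhatN\<close> is
  \<open>U n k / N\<close> plus an average of \<open>j (j + 1) / 2\<close> independent sub-Gaussian variables.
  In block \<open>M + 1\<close> the agents accessing resource 1 form a uniformly random subset of
  \<open>{1..N}\<close>: on average agent \<open>n\<close> collects \<open>U n 1 (1 - 2^-N) / N\<close> per step and accesses
  at half of the steps, so \<open>rbar / (2 UhatN)\<close> is close to \<open>1 - 2^-N\<close> and rounding
  \<open>- log\<^sub>2 (1 - rbar / (2 UhatN))\<close> returns \<open>N\<close> exactly. By Chernoff and Hoeffding bounds,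
  outside an event of probability \<open>O(exp (- c j\<^sup>2))\<close> all these averages are within a fixed
  \<open>\<epsilon>\<close> of their means. Then \<open>Nhat = N\<close>, every estimated welfare is within \<open>N\<^sup>2 \<epsilon>\<close> of
  the true one, and for \<open>\<epsilon>\<close> below half the welfare gap of \<open>mstar\<close> the allocation \<open>mstar\<close>
  is the unique maximiser of the estimates.\<close>

section \<open>Concentration of averages of independent variables\<close>

lemma (in prob_space) subgaussian_sum_tail:
  fixes X :: "'i \<Rightarrow> 'a \<Rightarrow> real"
  assumes fin: "finite I" and ne: "I \<noteq> {}"
    and ind: "indep_vars (\<lambda>_. borel) X I"
    and mgf: "\<And>i l. i \<in> I \<Longrightarrow> integrable M (\<lambda>x. exp (l * X i x)) \<and>
                 expectation (\<lambda>x. exp (l * X i x)) \<le> exp (l\<^sup>2 * \<sigma> / 2)"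
    and sig: "\<sigma> > 0" and t: "t \<ge> 0"
  shows "prob {x\<in>space M. (\<Sum>i\<in>I. X i x) \<ge> t} \<le> exp (- t\<^sup>2 / (2 * real (card I) * \<sigma>))"
proof (cases "t = 0")
  case True
  then show ?thesis by simp
next
  case False
  with t have tp: "t > 0" by auto
  define d where "d = real (card I) * \<sigma>"
  have d: "d > 0" using fin ne sig by (simp add: d_def card_gt_0_iff)
  define l where "l = t / d"
  have l: "l > 0" using tp d by (simp add: l_def)
  have rv: "\<And>i. i \<in> I \<Longrightarrow> random_variable borel (X i)"
    using ind unfolding indep_vars_def by blast
  have [measurable]: "(\<lambda>x. \<Sum>i\<in>I. X i x) \<in> borel_measurable M"
    by (auto intro!: borel_measurable_sum rv)
  have "ennreal (prob {x\<in>space M. (\<Sum>i\<in>I. X i x) \<ge> t}) = emeasure M {x\<in>space M. (\<Sum>i\<in>I. X i x) \<ge> t}"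
    by (simp add: emeasure_eq_measure)
  also have "\<dots> \<le> ennreal (exp (-l*t)) * (\<integral>\<^sup>+x\<in>space M. exp (l * (\<Sum>i\<in>I. X i x)) \<partial>M)"
    by (intro Chernoff_ineq_nn_integral_ge l) auto
  also have "(\<integral>\<^sup>+x\<in>space M. exp (l * (\<Sum>i\<in>I. X i x)) \<partial>M) =
             (\<integral>\<^sup>+x. (\<Prod>i\<in>I. ennreal (exp (l * X i x))) \<partial>M)"
    by (intro nn_integral_cong) (simp_all add: sum_distrib_left exp_sum fin prod_ennreal)
  also have "\<dots> = (\<Prod>i\<in>I. \<integral>\<^sup>+x. ennreal (exp (l * X i x)) \<partial>M)"
    by (intro indep_vars_nn_integral fin indep_vars_compose2[OF ind]) auto
  also have "ennreal (exp (-l * t)) * \<dots> \<le>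
               ennreal (exp (-l * t)) * (\<Prod>i\<in>I. ennreal (exp (l\<^sup>2 * \<sigma> / 2)))"
  proof (intro mult_left_mono prod_mono_ennreal)
    fix i assume i: "i \<in> I"
    have "(\<integral>\<^sup>+x. ennreal (exp (l * X i x)) \<partial>M) = ennreal (expectation (\<lambda>x. exp (l * X i x)))"
      using mgf[OF i, of l] by (intro nn_integral_eq_integral) auto
    also have "\<dots> \<le> ennreal (exp (l\<^sup>2 * \<sigma> / 2))"
      using mgf[OF i, of l] by (intro ennreal_leI) auto
    finally show "(\<integral>\<^sup>+x. ennreal (exp (l * X i x)) \<partial>M) \<le> ennreal (exp (l\<^sup>2 * \<sigma> / 2))" .
  qed auto
  also have "\<dots> = ennreal (exp (-l*t) * exp (d * l\<^sup>2 / 2))"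
    by (simp add: d_def ennreal_power ennreal_mult mult_ac flip: exp_of_nat_mult)
  also have "exp (-l*t) * exp (d * l\<^sup>2 / 2) = exp (- t\<^sup>2 / (2 * d))"
    using d by (simp add: mult_exp_exp l_def field_simps power2_eq_square)
  finally show ?thesis
    by (subst (asm) ennreal_le_iff) (simp_all add: d_def mult.assoc)
qed

lemma (in prob_space) subgaussian_average_deviation:
  fixes X :: "'i \<Rightarrow> 'a \<Rightarrow> real"
  assumes fin: "finite I" and ne: "I \<noteq> {}"
    and ind: "indep_vars (\<lambda>_. borel) X I"
    and mgf: "\<And>i l. i \<in> I \<Longrightarrow> integrable M (\<lambda>x. exp (l * X i x)) \<and>
                 expectation (\<lambda>x. exp (l * X i x)) \<le> exp (l\<^sup>2 * \<sigma> / 2)"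
    and sig: "\<sigma> > 0" and eps: "\<epsilon> \<ge> 0"
  shows "prob {x\<in>space M. \<epsilon> \<le> \<bar>(\<Sum>i\<in>I. X i x) / real (card I)\<bar>}
           \<le> 2 * exp (- (\<epsilon>\<^sup>2 * real (card I) / (2 * \<sigma>)))"
proof -
  define K where "K = real (card I)"
  have K: "K > 0" using fin ne by (simp add: K_def card_gt_0_iff)
  have rv: "\<And>i. i \<in> I \<Longrightarrow> random_variable borel (X i)"
    using ind unfolding indep_vars_def by blast
  have [measurable]: "(\<lambda>x. \<Sum>i\<in>I. X i x) \<in> borel_measurable M"
    by (auto intro!: borel_measurable_sum rv)
  have ind_neg: "indep_vars (\<lambda>_. borel) (\<lambda>i x. - X i x) I"
    by (rule indep_vars_compose2[OF ind]) auto
  have mgf_neg: "integrable M (\<lambda>x. exp (l * - X i x)) \<and>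
      expectation (\<lambda>x. exp (l * - X i x)) \<le> exp (l\<^sup>2 * \<sigma> / 2)" if "i \<in> I" for i l
    using mgf[OF that, of "-l"] by simp
  have tail: "prob {x\<in>space M. (\<Sum>i\<in>I. Y i x) \<ge> \<epsilon> * K} \<le> exp (- (\<epsilon>\<^sup>2 * K / (2 * \<sigma>)))"
    if "indep_vars (\<lambda>_. borel) Y I"
      and "\<And>i l. i \<in> I \<Longrightarrow> integrable M (\<lambda>x. exp (l * Y i x)) \<and>
                 expectation (\<lambda>x. exp (l * Y i x)) \<le> exp (l\<^sup>2 * \<sigma> / 2)" for Y
  proof -
    have "- (\<epsilon> * K)\<^sup>2 / (2 * K * \<sigma>) = - (\<epsilon>\<^sup>2 * K / (2 * \<sigma>))"
      using K by (simp add: power2_eq_square field_simps)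
    then show ?thesis
      using subgaussian_sum_tail[OF fin ne that sig, of "\<epsilon> * K"] K eps by (simp add: K_def)
  qed
  have "{x\<in>space M. \<epsilon> \<le> \<bar>(\<Sum>i\<in>I. X i x) / K\<bar>} =
        {x\<in>space M. (\<Sum>i\<in>I. X i x) \<ge> \<epsilon> * K} \<union> {x\<in>space M. (\<Sum>i\<in>I. - X i x) \<ge> \<epsilon> * K}"
    using K by (auto simp: abs_div pos_le_divide_eq sum_negf)
  also have "prob \<dots> \<le> prob {x\<in>space M. (\<Sum>i\<in>I. X i x) \<ge> \<epsilon> * K}
                     + prob {x\<in>space M. (\<Sum>i\<in>I. - X i x) \<ge> \<epsilon> * K}"
    by (intro measure_Un_le) (auto simp: sum_negf)
  also have "\<dots> \<le> 2 * exp (- (\<epsilon>\<^sup>2 * K / (2 * \<sigma>)))"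
    using tail[OF ind mgf] tail[OF ind_neg mgf_neg] by simp
  finally show ?thesis by (simp add: K_def)
qed

lemma (in prob_space) bounded_average_deviation:
  fixes X :: "'i \<Rightarrow> 'a \<Rightarrow> real"
  assumes fin: "finite I" and ne: "I \<noteq> {}"
    and ind: "indep_vars (\<lambda>_. borel) X I"
    and range: "\<And>i x. i \<in> I \<Longrightarrow> x \<in> space M \<Longrightarrow> a \<le> X i x \<and> X i x \<le> b" and ab: "a < b"
    and mean: "\<And>i. i \<in> I \<Longrightarrow> expectation (X i) = \<mu>"
    and eps: "\<epsilon> \<ge> 0"
  shows "prob {x\<in>space M. \<epsilon> \<le> \<bar>(\<Sum>i\<in>I. X i x) / real (card I) - \<mu>\<bar>}
           \<le> 2 * exp (- (2 * \<epsilon>\<^sup>2 * real (card I) / (b - a)\<^sup>2))"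
proof -
  define K where "K = real (card I)"
  have K: "K > 0" using fin ne by (simp add: K_def card_gt_0_iff)
  interpret Hoeffding_ineq M I X "\<lambda>_. a" "\<lambda>_. b" "\<Sum>i\<in>I. expectation (X i)"
    by unfold_locales (use fin ind range in \<open>auto intro!: AE_I2\<close>)
  have sum_mean: "(\<Sum>i\<in>I. expectation (X i)) = K * \<mu>"
    using mean by (simp add: K_def)
  have "{x\<in>space M. \<epsilon> \<le> \<bar>(\<Sum>i\<in>I. X i x) / K - \<mu>\<bar>} =
        {x\<in>space M. \<bar>(\<Sum>i\<in>I. X i x) - (\<Sum>i\<in>I. expectation (X i))\<bar> \<ge> \<epsilon> * K}"
  proof -
    have "S / K - \<mu> = (S - K * \<mu>) / K" for S
      using K by (simp add: field_simps)
    then have "\<bar>S / K - \<mu>\<bar> = \<bar>S - K * \<mu>\<bar> / K" for S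
      using K by (simp add: abs_div)
    then show ?thesis using K by (simp add: sum_mean pos_le_divide_eq)
  qed
  also have "prob \<dots> \<le> 2 * exp (-2 * (\<epsilon> * K)\<^sup>2 / (\<Sum>i\<in>I. (b - a)\<^sup>2))"
    by (rule Hoeffding_ineq_abs_ge) (use eps K ab fin ne in \<open>auto simp: K_def\<close>)
  also have "-2 * (\<epsilon> * K)\<^sup>2 / (\<Sum>i\<in>I. (b - a)\<^sup>2) = - (2 * \<epsilon>\<^sup>2 * K / (b - a)\<^sup>2)"
  proof -
    have "(\<Sum>i\<in>I. (b - a)\<^sup>2) = K * (b - a)\<^sup>2" by (simp add: K_def)
    moreover have "-2 * (\<epsilon> * K)\<^sup>2 / (K * d) = - (2 * \<epsilon>\<^sup>2 * K / d)" if "d > 0" for d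
      using K that by (simp add: power2_eq_square field_simps)
    ultimately show ?thesis using ab by simp
  qed
  finally show ?thesis by (simp add: K_def)
qed

lemma (in prob_space) indicator_mult_mgf_le:
  fixes X Y :: "'a \<Rightarrow> real"
  assumes ind: "indep_var borel Y borel X"
    and Y01: "\<And>\<omega>. \<omega> \<in> space M \<Longrightarrow> Y \<omega> = 0 \<or> Y \<omega> = 1"
    and int: "integrable M (\<lambda>\<omega>. exp (l * X \<omega>))"
    and mgf: "expectation (\<lambda>\<omega>. exp (l * X \<omega>)) \<le> exp (l\<^sup>2 * \<sigma> / 2)"
    and sig: "\<sigma> \<ge> 0"
  shows "integrable M (\<lambda>\<omega>. exp (l * (Y \<omega> * X \<omega>))) \<and>
         expectation (\<lambda>\<omega>. exp (l * (Y \<omega> * X \<omega>))) \<le> exp (l\<^sup>2 * \<sigma> / 2)"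
proof -
  have [measurable]: "random_variable borel Y"
    using ind unfolding indep_var_eq by blast
  have Y_unit: "0 \<le> Y \<omega> \<and> Y \<omega> \<le> 1" if "\<omega> \<in> space M" for \<omega>
    using Y01[OF that] by auto
  then have intY: "integrable M Y"
    by (intro integrable_const_bound[where B=1] AE_I2) auto
  have EY: "0 \<le> expectation Y" "expectation Y \<le> 1"
    using Y_unit intY by (auto intro!: integral_nonneg_AE integral_le_const AE_I2)
  have "indep_var borel ((\<lambda>y. y) \<circ> Y) borel ((\<lambda>x. exp (l * x)) \<circ> X)"
    by (rule indep_var_compose[OF ind]) auto
  then have ind_exp: "indep_var borel Y borel (\<lambda>\<omega>. exp (l * X \<omega>))"
    by (simp add: o_def)
  have int_prod: "integrable M (\<lambda>\<omega>. Y \<omega> * exp (l * X \<omega>))"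
    by (rule indep_var_integrable[OF ind_exp intY int])
  have split: "exp (l * (Y \<omega> * X \<omega>)) = Y \<omega> * exp (l * X \<omega>) + (1 - Y \<omega>)" if "\<omega> \<in> space M" for \<omega>
    using Y01[OF that] by auto
  have int_split: "integrable M (\<lambda>\<omega>. Y \<omega> * exp (l * X \<omega>) + (1 - Y \<omega>))"
    using int_prod intY by auto
  have "integrable M (\<lambda>\<omega>. exp (l * (Y \<omega> * X \<omega>)))"
    using int_split by (subst Bochner_Integration.integrable_cong) (simp_all add: split)
  moreover have "expectation (\<lambda>\<omega>. exp (l * (Y \<omega> * X \<omega>))) =
      expectation Y * expectation (\<lambda>\<omega>. exp (l * X \<omega>)) + (1 - expectation Y)"
  proof -
    have "expectation (\<lambda>\<omega>. exp (l * (Y \<omega> * X \<omega>))) =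
        expectation (\<lambda>\<omega>. Y \<omega> * exp (l * X \<omega>) + (1 - Y \<omega>))"
      by (rule Bochner_Integration.integral_cong) (simp_all add: split)
    then show ?thesis
      using int_prod intY by (simp add: prob_space indep_var_lebesgue_integral[OF ind_exp intY int])
  qed
  moreover have "expectation Y * expectation (\<lambda>\<omega>. exp (l * X \<omega>)) + (1 - expectation Y)
      \<le> expectation Y * exp (l\<^sup>2 * \<sigma> / 2) + (1 - expectation Y) * exp (l\<^sup>2 * \<sigma> / 2)"
  proof -
    have "1 \<le> exp (l\<^sup>2 * \<sigma> / 2)" using sig by simp
    then have "(1 - expectation Y) * 1 \<le> (1 - expectation Y) * exp (l\<^sup>2 * \<sigma> / 2)"
      using EY by (intro mult_left_mono) auto
    then show ?thesis
      using EY mgf by (intro add_mono mult_left_mono) auto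
  qed
  ultimately show ?thesis by (simp add: algebra_simps)
qed

lemma (in prob_space) indep_vars_disjoint_blocks:
  assumes ind: "indep_vars (\<lambda>_. borel) B UNIV"
    and disj: "disjoint_family_on K I"
    and G: "\<And>p. p \<in> I \<Longrightarrow> G p \<in> borel_measurable (PiM (K p) (\<lambda>_. borel))"
    and F: "\<And>p \<omega>. p \<in> I \<Longrightarrow> F p \<omega> = G p (restrict (\<lambda>x. B x \<omega>) (K p))"
  shows "indep_vars (\<lambda>_. borel) F I"
proof -
  have "indep_vars (\<lambda>p. PiM (K p) (\<lambda>_. borel)) (\<lambda>p \<omega>. restrict (\<lambda>x. B x \<omega>) (K p)) I"
    by (rule indep_vars_restrict[OF ind]) (use disj in auto)
  then have "indep_vars (\<lambda>_. borel) (\<lambda>p \<omega>. G p (restrict (\<lambda>x. B x \<omega>) (K p))) I"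
    by (rule indep_vars_compose2) (rule G)
  moreover have "(\<lambda>\<omega>. G p (restrict (\<lambda>x. B x \<omega>) (K p))) = F p" if "p \<in> I" for p
    using F[OF that] by (simp add: fun_eq_iff)
  ultimately show ?thesis
    using indep_vars_cong[of I I "\<lambda>p \<omega>. G p (restrict (\<lambda>x. B x \<omega>) (K p))" F] by simp
qed

lemma sum_Pow_mem_div_card_swap:
  assumes "a \<in> A" and "a' \<in> A"
  shows "(\<Sum>S\<in>Pow A. of_bool (a' \<in> S) / real (card S)) = (\<Sum>S\<in>Pow A. of_bool (a \<in> S) / real (card S))"
proof -
  let ?t = "Transposition.transpose a a'"
  have tt: "?t ` ?t ` S = S" for S
    by (simp add: image_comp)
  have tA: "?t x \<in> A" if "x \<in> A" for x
    using assms that by (simp add: Transposition.transpose_def)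
  have mem: "a' \<in> ?t ` S \<longleftrightarrow> a \<in> S" for S
  proof -
    have "?t x = a' \<longleftrightarrow> x = a" for x by (auto simp: Transposition.transpose_def)
    then show ?thesis by (metis image_iff)
  qed
  have "bij_betw (image ?t) (Pow A) (Pow A)"
    by (rule bij_betwI[where g = "image ?t"]) (use tA tt in auto)
  then have "(\<Sum>S\<in>Pow A. of_bool (a' \<in> S) / real (card S)) =
             (\<Sum>S\<in>Pow A. of_bool (a' \<in> ?t ` S) / real (card (?t ` S)))"
    by (rule sum.reindex_bij_betw[symmetric])
  also have "\<dots> = (\<Sum>S\<in>Pow A. of_bool (a \<in> S) / real (card S))"
    by (intro sum.cong refl) (simp add: card_image mem)
  finally show ?thesis .
qed
lemma sum_Pow_mem_div_card:
  assumes fin: "finite A" and aA: "a \<in> A"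
  shows "(\<Sum>S\<in>Pow A. of_bool (a \<in> S) / real (card S)) = (2 ^ card A - 1) / real (card A)"
proof -
  define f where "f x = (\<Sum>S\<in>Pow A. of_bool (x \<in> S) / real (card S))" for x
  have "real (card A) * f a = (\<Sum>x\<in>A. f x)"
    using sum_Pow_mem_div_card_swap[OF aA] by (simp add: f_def)
  also have "\<dots> = (\<Sum>S\<in>Pow A. \<Sum>x\<in>A. of_bool (x \<in> S) / real (card S))"
    unfolding f_def by (rule sum.swap)
  also have "\<dots> = (\<Sum>S\<in>Pow A. of_bool (S \<noteq> {}))"
  proof (intro sum.cong refl)
    fix S assume S: "S \<in> Pow A"
    then have "A \<inter> {x. x \<in> S} = S" by auto
    then have "(\<Sum>x\<in>A. of_bool (x \<in> S) :: real) = real (card S)"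
      using fin by simp
    then show "(\<Sum>x\<in>A. of_bool (x \<in> S) / real (card S)) = of_bool (S \<noteq> {})"
      using S fin by (auto simp: finite_subset simp flip: sum_divide_distrib)
  qed
  also have "\<dots> = (\<Sum>S\<in>Pow A - {{}}. 1)"
    by (rule sum.mono_neutral_cong_right) (auto simp: fin)
  also have "\<dots> = 2 ^ card A - 1"
    using fin by (simp add: card_Diff_singleton card_Pow of_nat_diff)
  finally have "real (card A) * f a = 2 ^ card A - 1" .
  moreover have "card A > 0"
    using fin aA by (auto simp: card_gt_0_iff)
  ultimately show ?thesis
    by (simp add: f_def field_simps)
qed

lemma ratio_estimate_error:
  fixes a q e x y z \<epsilon> :: real
  assumes a: "a > 0" and q: "0 \<le> q" "q \<le> 1"
    and eps: "\<epsilon> \<le> 1/4" "\<epsilon> \<le> a/2"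
    and err: "\<bar>e\<bar> < \<epsilon>" "\<bar>x\<bar> < \<epsilon>" "\<bar>y\<bar> < \<epsilon>" "\<bar>z\<bar> < \<epsilon>"
  shows "\<bar>((a*q + x + z) / (1/2 + y)) / (2*(a + e)) - q\<bar> \<le> 4 * \<epsilon> * (4 + 2*a) / a"
proof -
  define D where "D = (1 + 2*y) * (a + e)"
  have "D \<ge> (1/2) * (a/2)"
    unfolding D_def using err eps a by (intro mult_mono) auto
  then have D: "D \<ge> a/4" "D > 0" using a by auto
  have frac: "((a*q + x + z) / (1/2 + y)) / (2*(a + e)) = (a*q + x + z) / D"
    by (simp add: D_def divide_divide_eq_left algebra_simps)
  have num: "a*q + x + z - q*D = x + z - q*(2*a*y + e + 2*y*e)"
    by (simp add: D_def algebra_simps)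
  have num_bound: "\<bar>x + z - q*(2*a*y + e + 2*y*e)\<bar> \<le> \<epsilon> * (4 + 2*a)"
  proof -
    have "\<bar>q*(2*a*y + e + 2*y*e)\<bar> \<le> \<bar>2*a*y + e + 2*y*e\<bar>"
      using q by (simp add: abs_mult mult_left_le_one_le)
    also have "\<dots> \<le> \<bar>2*a*y\<bar> + \<bar>e\<bar> + \<bar>2*y*e\<bar>"
      by arith
    finally have "\<bar>q*(2*a*y + e + 2*y*e)\<bar> \<le> \<bar>2*a*y\<bar> + \<bar>e\<bar> + \<bar>2*y*e\<bar>" .
    moreover have "\<bar>2*a*y\<bar> \<le> 2*a*\<epsilon>" using a err by (simp add: abs_mult)
    moreover have "\<bar>2*y*e\<bar> \<le> \<epsilon>/2"
    proof -
      have "\<bar>y\<bar> * \<bar>e\<bar> \<le> \<epsilon> * (1/4)" using err eps by (intro mult_mono) auto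
      then show ?thesis by (simp add: abs_mult)
    qed
    moreover have "\<bar>x + z - q*(2*a*y + e + 2*y*e)\<bar> \<le> \<bar>x\<bar> + \<bar>z\<bar> + \<bar>q*(2*a*y + e + 2*y*e)\<bar>"
      by arith
    moreover have "\<epsilon> * (4 + 2*a) = 4*\<epsilon> + 2*a*\<epsilon>"
      by (simp add: algebra_simps)
    ultimately show ?thesis using err by linarith
  qed
  have "\<bar>(a*q + x + z) / D - q\<bar> = \<bar>a*q + x + z - q*D\<bar> / D"
    using D by (simp add: field_simps abs_div)
  also have "\<dots> \<le> \<epsilon> * (4 + 2*a) / (a/4)"
    unfolding num using num_bound D a err by (intro frac_le) auto
  also have "\<dots> = 4 * \<epsilon> * (4 + 2*a) / a"
    by simp
  finally show ?thesis
    unfolding frac .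
qed

lemma ratio_estimate_close:
  fixes a A q e x y z \<epsilon> \<eta> :: real
  assumes a: "amin \<le> a" "0 < amin" "a \<le> A" and q: "0 \<le> q" "q \<le> 1"
    and eps: "\<epsilon> \<le> 1/4" "\<epsilon> \<le> amin/2" "\<epsilon> \<le> \<eta> * amin / (8*(4 + 2*A))"
    and err: "\<bar>e\<bar> < \<epsilon>" "\<bar>x\<bar> < \<epsilon>" "\<bar>y\<bar> < \<epsilon>" "\<bar>z\<bar> < \<epsilon>"
  shows "\<bar>((a*q + x + z) / (1/2 + y)) / (2*(a + e)) - q\<bar> < \<eta>"
proof -
  have ep: "\<epsilon> > 0" using err by linarith
  have A: "4 + 2*A > 0" using a by linarith
  have "\<bar>((a*q + x + z) / (1/2 + y)) / (2*(a + e)) - q\<bar> \<le> 4 * \<epsilon> * (4 + 2*a) / a"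
    by (rule ratio_estimate_error) (use a q eps err in auto)
  also have "\<dots> \<le> 4 * \<epsilon> * (4 + 2*A) / amin"
    by (rule frac_le) (use a ep in \<open>auto intro!: mult_left_mono\<close>)
  also have "\<dots> \<le> 4 * (\<eta> * amin / (8*(4 + 2*A))) * (4 + 2*A) / amin"
    by (intro divide_right_mono mult_right_mono mult_left_mono eps) (use A a in auto)
  also have "\<dots> = \<eta> / 2"
  proof -
    have "amin * (4 + 2*A) \<noteq> 0" using A a by simp
    then show ?thesis by (simp add: field_simps)
  qed
  also have "\<dots> < \<eta>"
  proof -
    have "\<eta> * amin / (8*(4 + 2*A)) > 0" using ep eps by linarith
    then show ?thesis using A a by (simp add: zero_less_divide_iff zero_less_mult_iff)
  qed
  finally show ?thesis .
qed

lemma round_log_half_eq_of_bounds: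
  fixes s :: real
  assumes lo: "(1/2)^N / sqrt 2 < s" and hi: "s < (1/2)^N * sqrt 2"
  shows "round (ln s / ln (1/2)) = int N"
proof -
  have ln2: "ln (2::real) > 0" by simp
  have "0 < (1/2::real)^N / sqrt 2" by simp
  then have s: "s > 0" using lo by linarith
  have "ln ((1/2::real)^N / sqrt 2) < ln s"
    using lo s by simp
  then have "- ln s < (real N + 1/2) * ln 2"
    by (simp add: ln_div ln_realpow ln_sqrt algebra_simps)
  then have upper: "- ln s / ln 2 < real N + 1/2"
    by (simp only: pos_divide_less_eq[OF ln2])
  have "ln s < ln ((1/2::real)^N * sqrt 2)"
    using hi s by simp
  then have "(real N - 1/2) * ln 2 < - ln s"
    by (simp add: ln_mult ln_div ln_realpow ln_sqrt algebra_simps)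
  then have lower: "real N - 1/2 < - ln s / ln 2"
    by (simp only: pos_less_divide_eq[OF ln2])
  have "ln s / ln (1/2) = - ln s / ln 2"
    by (simp add: ln_div)
  then show ?thesis
    using upper lower by (intro round_unique) auto
qed

lemma round_log_half_eq:
  fixes t :: real
  assumes "\<bar>t - (1 - (1/2)^N)\<bar> < (1/2)^N / 4"
  shows "round (ln (1 - t) / ln (1/2)) = int N"
proof (rule round_log_half_eq_of_bounds)
  define p :: real where "p = (1/2)^N"
  have p: "p > 0" by (simp add: p_def)
  have "\<bar>t - (1 - p)\<bar> < p / 4"
    using assms by (simp add: p_def)
  then have t: "3/4 * p < 1 - t" "1 - t < 5/4 * p"
    by (simp_all only: abs_less_iff) linarith+
  have "4 < sqrt (2::real) * 3" and "5 < sqrt (2::real) * 4"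
    using real_less_rsqrt[of "4/3" 2] real_less_rsqrt[of "5/4" 2] by (simp_all add: power2_eq_square)
  then have "p / sqrt 2 < 3/4 * p" and "5/4 * p < p * sqrt 2"
    using p by (simp_all add: field_simps)
  with t show "(1/2)^N / sqrt 2 < 1 - t" and "1 - t < (1/2)^N * sqrt 2"
    unfolding p_def by linarith+
qed

lemma finite_strict_upper_bound_gap:
  fixes f :: "'b \<Rightarrow> real"
  assumes "finite S" and "\<And>x. x \<in> S \<Longrightarrow> f x < a"
  obtains \<Delta> where "\<Delta> > 0" and "\<And>x. x \<in> S \<Longrightarrow> f x + \<Delta> \<le> a"
proof (cases "S = {}")
  case True
  then show ?thesis using that[of 1] by auto
next
  case False
  define \<Delta> where "\<Delta> = Min ((\<lambda>x. a - f x) ` S)"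
  have "\<Delta> \<in> (\<lambda>x. a - f x) ` S"
    unfolding \<Delta>_def using assms(1) False by (intro Min_in) auto
  then have "\<Delta> > 0" using assms(2) by auto
  moreover have "f x + \<Delta> \<le> a" if "x \<in> S" for x
    using Min_le[OF _ imageI[OF that], of "\<lambda>x. a - f x"] assms(1) by (simp add: \<Delta>_def)
  ultimately show ?thesis using that by blast
qed

lemma exp_neg_quadratic_bigo:
  fixes r :: real
  assumes "r > 0"
  shows "(\<lambda>j::nat. exp (- (r * (real j * (real j + 1) / 2)))) \<in> O(\<lambda>j. exp (- (real j powr 1.4)))"
  using assms by real_asymp

lemma load_pos:
  assumes "n \<in> {1..N}"
  shows "1 \<le> load N m n"
proof -
  have "n \<in> {k \<in> {1..N}. m k = m n}" using assms by simp
  then have "card {k \<in> {1..N}. m k = m n} > 0" by (auto simp: card_gt_0_iff)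
  then show ?thesis by (simp add: load_def)
qed

section \<open>The Estimation phase\<close>

locale ene_estimation = prob_space P for P :: "'a measure" +
  fixes N M :: nat and U :: "nat \<Rightarrow> nat \<Rightarrow> real" and Umax b :: real
    and nu :: "nat \<times> nat \<times> nat \<times> nat \<Rightarrow> 'a \<Rightarrow> real"
    and c :: "nat \<times> nat \<times> nat \<Rightarrow> 'a \<Rightarrow> bool"
  assumes N_pos: "1 \<le> N" and M_pos: "1 \<le> M"
    and U_range: "\<And>n m. n \<in> {1..N} \<Longrightarrow> m \<in> {1..M} \<Longrightarrow> 0 \<le> U n m \<and> U n m \<le> Umax"
    and U1_pos: "\<And>n. n \<in> {1..N} \<Longrightarrow> 0 < U n 1"
    and noise_subg: "\<And>x. subgaussian P (nu x) b"
    and coin_meas [measurable]: "\<And>y. c y \<in> measurable P (count_space UNIV)"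
    and coin_fair: "\<And>y. prob {\<omega> \<in> space P. c y \<omega>} = 1 / 2"
    and all_indep: "indep_vars (\<lambda>_. borel) (case_sum nu (\<lambda>y \<omega>. of_bool (c y \<omega>) :: real)) UNIV"
begin

abbreviation primitive_vars :: "nat \<times> nat \<times> nat \<times> nat + nat \<times> nat \<times> nat \<Rightarrow> 'a \<Rightarrow> real" where
  "primitive_vars \<equiv> case_sum nu (\<lambda>y \<omega>. of_bool (c y \<omega>))"

text \<open>The definition of \<open>subgaussian\<close> allows the variance proxy \<open>b = 0\<close>; the
  concentration bounds need a strictly positive one.\<close>
definition noise_proxy :: real where
  "noise_proxy = \<bar>b\<bar> + 1"

lemma noise_proxy_pos: "noise_proxy > 0"
  by (simp add: noise_proxy_def)

lemma noise_mgf: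
  "integrable P (\<lambda>\<omega>. exp (l * nu x \<omega>)) \<and>
   expectation (\<lambda>\<omega>. exp (l * nu x \<omega>)) \<le> exp (l\<^sup>2 * noise_proxy / 2)"
proof -
  have "integrable P (\<lambda>\<omega>. exp (l * nu x \<omega>)) \<and>
        expectation (\<lambda>\<omega>. exp (l * nu x \<omega>)) \<le> exp (l\<^sup>2 * b / 2)"
    using noise_subg[of x] by (simp add: subgaussian_def)
  moreover have "exp (l\<^sup>2 * b / 2) \<le> exp (l\<^sup>2 * noise_proxy / 2)"
    by (auto simp: noise_proxy_def intro!: mult_left_mono divide_right_mono)
  ultimately show ?thesis by linarith
qed

lemma expectation_coin: "expectation (\<lambda>\<omega>. of_bool (c y \<omega>) :: real) = 1 / 2"
proof -
  have "expectation (\<lambda>\<omega>. of_bool (c y \<omega>) :: real) = expectation (indicator {\<omega> \<in> space P. c y \<omega>})"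
    by (intro Bochner_Integration.integral_cong) (auto simp: indicator_def)
  then show ?thesis
    using coin_fair by simp
qed

lemma coin_noise_mgf:
  "integrable P (\<lambda>\<omega>. exp (l * (of_bool (c y \<omega>) * nu x \<omega>))) \<and>
   expectation (\<lambda>\<omega>. exp (l * (of_bool (c y \<omega>) * nu x \<omega>))) \<le> exp (l\<^sup>2 * noise_proxy / 2)"
proof (rule indicator_mult_mgf_le)
  have "indep_var borel (primitive_vars (Inr y)) borel (\<lambda>\<omega>. \<Sum>w\<in>{Inl x}. primitive_vars w \<omega>)"
    by (rule indep_vars_sum) (auto intro: indep_vars_subset[OF all_indep])
  then show "indep_var borel (\<lambda>\<omega>. of_bool (c y \<omega>)) borel (nu x)"
    by simp
qed (use noise_mgf[of l x] noise_proxy_pos in auto)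

definition accessors :: "nat \<Rightarrow> nat \<Rightarrow> 'a \<Rightarrow> nat set" where
  "accessors i s \<omega> = {k \<in> {1..N}. c (i, s, k) \<omega>}"

lemma accessors_eq_sets [measurable]: "{\<omega> \<in> space P. accessors i s \<omega> = S} \<in> sets P"
proof -
  have "{\<omega> \<in> space P. accessors i s \<omega> = S} =
        {\<omega> \<in> space P. (\<forall>k\<in>{1..N}. c (i, s, k) \<omega> = (k \<in> S)) \<and> S \<subseteq> {1..N}}"
    by (auto simp: accessors_def)
  also have "\<dots> \<in> sets P" by measurable
  finally show ?thesis .
qed

lemma prob_accessors_eq:
  assumes S: "S \<subseteq> {1..N}"
  shows "prob {\<omega> \<in> space P. accessors i s \<omega> = S} = (1/2)^N"
proof -
  define J :: "(nat \<times> nat \<times> nat \<times> nat + nat \<times> nat \<times> nat) set"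
    where "J = (\<lambda>k. Inr (i, s, k)) ` {1..N}"
  define A :: "nat \<times> nat \<times> nat \<times> nat + nat \<times> nat \<times> nat \<Rightarrow> real set"
    where "A w = (case w of Inr (_, _, k) \<Rightarrow> (if k \<in> S then {1} else {0}) | Inl _ \<Rightarrow> UNIV)" for w
  have coin_prob: "prob (primitive_vars (Inr (i, s, k)) -` A (Inr (i, s, k)) \<inter> space P) = 1/2" for k
  proof (cases "k \<in> S")
    case True
    then have "primitive_vars (Inr (i, s, k)) -` A (Inr (i, s, k)) \<inter> space P = {\<omega> \<in> space P. c (i, s, k) \<omega>}"
      by (auto simp: A_def)
    then show ?thesis using coin_fair by simp
  next
    case False
    then have "primitive_vars (Inr (i, s, k)) -` A (Inr (i, s, k)) \<inter> space P =
               space P - {\<omega> \<in> space P. c (i, s, k) \<omega>}"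
      by (auto simp: A_def)
    moreover have "{\<omega> \<in> space P. c (i, s, k) \<omega>} \<in> events" by measurable
    ultimately show ?thesis using coin_fair prob_compl by simp
  qed
  have "{\<omega> \<in> space P. accessors i s \<omega> = S} = (\<Inter>w\<in>J. primitive_vars w -` A w \<inter> space P)"
    using S N_pos by (auto simp: J_def A_def accessors_def split: if_splits)
  also have "prob \<dots> = (\<Prod>w\<in>J. prob (primitive_vars w -` A w \<inter> space P))"
    using N_pos by (intro indep_varsD[OF all_indep]) (auto simp: J_def A_def)
  also have "\<dots> = (\<Prod>k\<in>{1..N}. prob (primitive_vars (Inr (i, s, k)) -` A (Inr (i, s, k)) \<inter> space P))"
    unfolding J_def by (simp add: prod.reindex inj_on_def)
  also have "\<dots> = (\<Prod>k\<in>{1..N}. 1/2)"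
    by (rule prod.cong[OF refl coin_prob])
  also have "\<dots> = (1/2)^N"
    by simp
  finally show ?thesis .
qed

lemma expectation_access_share:
  assumes n: "n \<in> {1..N}"
  shows "expectation (\<lambda>\<omega>. of_bool (c (i, s, n) \<omega>) * U n 1 / real (card (accessors i s \<omega>)))
         = U n 1 * (1 - (1/2)^N) / real N"
proof -
  define h where "h S = of_bool (n \<in> S) * U n 1 / real (card S)" for S
  define E where "E S = {\<omega> \<in> space P. accessors i s \<omega> = S}" for S
  have "of_bool (c (i, s, n) \<omega>) * U n 1 / real (card (accessors i s \<omega>)) =
        (\<Sum>S\<in>Pow {1..N}. h S * indicator (E S) \<omega>)" if "\<omega> \<in> space P" for \<omega>
  proof -
    have "(\<Sum>S\<in>Pow {1..N}. h S * indicator (E S) \<omega>) = (\<Sum>S\<in>Pow {1..N}. if accessors i s \<omega> = S then h S else 0)"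
      using that by (intro sum.cong) (auto simp: E_def indicator_def)
    also have "\<dots> = h (accessors i s \<omega>)"
      by (subst sum.delta') (auto simp: accessors_def)
    finally show ?thesis
      using n by (simp add: h_def accessors_def)
  qed
  then have "expectation (\<lambda>\<omega>. of_bool (c (i, s, n) \<omega>) * U n 1 / real (card (accessors i s \<omega>))) =
        expectation (\<lambda>\<omega>. \<Sum>S\<in>Pow {1..N}. h S * indicator (E S) \<omega>)"
    by (intro Bochner_Integration.integral_cong) auto
  also have "\<dots> = (\<Sum>S\<in>Pow {1..N}. h S * prob (E S))"
  proof (subst Bochner_Integration.integral_sum)
    show "integrable P (\<lambda>\<omega>. h S * indicator (E S) \<omega>)" for S
      unfolding E_def by (intro integrable_mult_right integrable_real_indicator) (auto simp: less_top[symmetric])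
  qed (simp add: E_def)
  also have "\<dots> = (\<Sum>S\<in>Pow {1..N}. h S * (1/2)^N)"
    by (intro sum.cong refl) (simp add: E_def prob_accessors_eq)
  also have "\<dots> = U n 1 * (1/2)^N * (\<Sum>S\<in>Pow {1..N}. of_bool (n \<in> S) / real (card S))"
    by (simp add: h_def sum_distrib_left sum_distrib_right mult_ac)
  also have "\<dots> = U n 1 * (1/2)^N * ((2 ^ N - 1) / real N)"
    using sum_Pow_mem_div_card[of "{1..N}" n] n by simp
  also have "\<dots> = U n 1 * (1 - (1/2)^N) / real N"
    by (simp add: field_simps power_divide)
  finally show ?thesis .
qed

definition est_steps :: "nat \<Rightarrow> (nat \<times> nat) set" where
  "est_steps j = Sigma {1..j} (\<lambda>i. {..<i})"

lemma finite_est_steps [simp]: "finite (est_steps j)"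
  by (simp add: est_steps_def)

lemma card_est_steps: "real (card (est_steps j)) = real j * (real j + 1) / 2"
proof -
  have "card (est_steps j) = (\<Sum>i\<in>{1..j}. i)" by (simp add: est_steps_def card_SigmaI)
  also have "real (\<Sum>i\<in>{1..j}. i) = real j * (real j + 1) / 2"
    by (induction j) (auto simp: field_simps)
  finally show ?thesis by simp
qed

lemma est_steps_nonempty:
  assumes "1 \<le> j"
  shows "est_steps j \<noteq> {}"
proof -
  have "(1, 0) \<in> est_steps j" using assms by (simp add: est_steps_def)
  then show ?thesis by blast
qed

lemma sum_est_steps: "(\<Sum>i = 1..j. \<Sum>s < i. f i s) = (\<Sum>p\<in>est_steps j. f (fst p) (snd p))"
  unfolding est_steps_def by (subst sum.Sigma) (auto simp: case_prod_beta)

text \<open>A step \<open>(i, s)\<close> owns the noises of all blocks at step \<open>s\<close> of epoch \<open>i\<close> and the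
  coins of block \<open>M + 1\<close> there; variables built from different steps are independent.\<close>
definition step_of :: "nat \<times> nat \<times> nat \<times> nat + nat \<times> nat \<times> nat \<Rightarrow> nat \<times> nat" where
  "step_of w = (case w of Inl (i, k, s, n) \<Rightarrow> (i, s) | Inr (i, s, n) \<Rightarrow> (i, s))"

lemma indep_vars_per_step:
  assumes "\<And>p. G p \<in> borel_measurable (PiM (step_of -` {p}) (\<lambda>_. borel))"
    and "\<And>p \<omega>. F p \<omega> = G p (restrict (\<lambda>w. primitive_vars w \<omega>) (step_of -` {p}))"
  shows "indep_vars (\<lambda>_. borel) F I"
  using assms by (intro indep_vars_disjoint_blocks[OF all_indep]) (auto simp: disjoint_family_on_def)

definition block_noise :: "nat \<Rightarrow> nat \<Rightarrow> nat \<times> nat \<Rightarrow> 'a \<Rightarrow> real" where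
  "block_noise k n p \<omega> = nu (fst p, k, snd p, n) \<omega>"

definition access :: "nat \<Rightarrow> nat \<times> nat \<Rightarrow> 'a \<Rightarrow> real" where
  "access n p \<omega> = of_bool (c (fst p, snd p, n) \<omega>)"

definition access_noise :: "nat \<Rightarrow> nat \<times> nat \<Rightarrow> 'a \<Rightarrow> real" where
  "access_noise n p \<omega> = of_bool (c (fst p, snd p, n) \<omega>) * nu (fst p, M + 1, snd p, n) \<omega>"

definition access_share :: "nat \<Rightarrow> nat \<times> nat \<Rightarrow> 'a \<Rightarrow> real" where
  "access_share n p \<omega> =
     of_bool (c (fst p, snd p, n) \<omega>) * U n 1 / real (card (accessors (fst p) (snd p) \<omega>))"

lemma component_measurable_step:
  "w \<in> step_of -` {p} \<Longrightarrow> (\<lambda>f. f w) \<in> borel_measurable (PiM (step_of -` {p}) (\<lambda>_. borel))"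
  by (rule measurable_component_singleton)

lemma indep_block_noise: "indep_vars (\<lambda>_. borel) (block_noise k n) I"
  by (rule indep_vars_per_step[where G = "\<lambda>p f. f (Inl (fst p, k, snd p, n))"])
     (auto simp: block_noise_def step_of_def intro!: component_measurable_step)

lemma indep_access: "indep_vars (\<lambda>_. borel) (access n) I"
  by (rule indep_vars_per_step[where G = "\<lambda>p f. f (Inr (fst p, snd p, n))"])
     (auto simp: access_def step_of_def intro!: component_measurable_step)

lemma indep_access_noise: "indep_vars (\<lambda>_. borel) (access_noise n) I"
  by (rule indep_vars_per_step[where G = "\<lambda>p f. f (Inr (fst p, snd p, n)) * f (Inl (fst p, M + 1, snd p, n))"])
     (auto simp: access_noise_def step_of_def intro!: borel_measurable_times component_measurable_step)

lemma card_accessors: "real (card (accessors i s \<omega>)) = (\<Sum>k\<in>{1..N}. of_bool (c (i, s, k) \<omega>))"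
proof -
  have "{1..N} \<inter> {k. c (i, s, k) \<omega>} = accessors i s \<omega>" by (auto simp: accessors_def)
  then show ?thesis by simp
qed

lemma indep_access_share: "indep_vars (\<lambda>_. borel) (access_share n) I"
  by (rule indep_vars_per_step[where G = "\<lambda>p f. f (Inr (fst p, snd p, n)) * U n 1 / (\<Sum>k\<in>{1..N}. f (Inr (fst p, snd p, k)))"])
     (auto simp: access_share_def step_of_def card_accessors
       intro!: borel_measurable_divide borel_measurable_times borel_measurable_sum component_measurable_step)

lemma measurable_of_indep_vars: "indep_vars (\<lambda>_. borel) X UNIV \<Longrightarrow> X p \<in> borel_measurable P"
  unfolding indep_vars_def by auto

lemmas per_step_measurable [measurable] =
  indep_block_noise[THEN measurable_of_indep_vars] indep_access[THEN measurable_of_indep_vars]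
  indep_access_noise[THEN measurable_of_indep_vars] indep_access_share[THEN measurable_of_indep_vars]

definition avg :: "nat \<Rightarrow> (nat \<times> nat \<Rightarrow> 'a \<Rightarrow> real) \<Rightarrow> 'a \<Rightarrow> real" where
  "avg j X \<omega> = (\<Sum>p\<in>est_steps j. X p \<omega>) / real (card (est_steps j))"

lemma avg_measurable [measurable]:
  assumes [measurable]: "\<And>p. X p \<in> borel_measurable P"
  shows "(\<lambda>\<omega>. avg j X \<omega>) \<in> borel_measurable P"
  unfolding avg_def by measurable

lemma UhatN_eq_avg:
  assumes j: "1 \<le> j" and k: "k \<in> {1..M}"
  shows "UhatN N M U nu c j n k \<omega> = U n k / real N + avg j (block_noise k n) \<omega>"
proof -
  define K where "K = real (card (est_steps j))"
  have K: "K > 0" using est_steps_nonempty[OF j] by (simp add: K_def card_gt_0_iff)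
  have "(\<Sum>i = 1..j. \<Sum>s < i. est_reward N M U nu c i k s n \<omega>) =
        (\<Sum>p\<in>est_steps j. est_reward N M U nu c (fst p) k (snd p) n \<omega>)"
    by (rule sum_est_steps)
  also have "\<dots> = (\<Sum>p\<in>est_steps j. U n k / real N + block_noise k n p \<omega>)"
    using k by (simp add: est_reward_def block_noise_def)
  also have "\<dots> = K * (U n k / real N) + (\<Sum>p\<in>est_steps j. block_noise k n p \<omega>)"
    by (simp add: sum.distrib K_def)
  finally show ?thesis
    using K by (simp add: UhatN_def avg_def flip: K_def card_est_steps) (simp add: field_simps)
qed

lemma rbar_eq_avg:
  assumes j: "1 \<le> j"
  shows "rbar N M U nu c j n \<omega> = (avg j (access_share n) \<omega> + avg j (access_noise n) \<omega>) / avg j (access n) \<omega>"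
proof -
  define T where "T = {(i, s). i \<in> {1..j} \<and> s < i \<and> c (i, s, n) \<omega>}"
  have T: "T = {p \<in> est_steps j. c (fst p, snd p, n) \<omega>}" by (auto simp: T_def est_steps_def)
  have "(\<Sum>(i, s)\<in>T. est_reward N M U nu c i (M + 1) s n \<omega>) =
        (\<Sum>p\<in>est_steps j. if c (fst p, snd p, n) \<omega> then est_reward N M U nu c (fst p) (M + 1) (snd p) n \<omega> else 0)"
    unfolding T sum.inter_filter[OF finite_est_steps] by (simp only: case_prod_beta)
  also have "\<dots> = (\<Sum>p\<in>est_steps j. access_share n p \<omega> + access_noise n p \<omega>)"
    by (intro sum.cong refl)
       (simp add: est_reward_def access_share_def access_noise_def accessors_def algebra_simps)
  also have "\<dots> = (\<Sum>p\<in>est_steps j. access_share n p \<omega>) + (\<Sum>p\<in>est_steps j. access_noise n p \<omega>)"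
    by (rule sum.distrib)
  finally have num: "(\<Sum>(i, s)\<in>T. est_reward N M U nu c i (M + 1) s n \<omega>) = \<dots>" .
  have "est_steps j \<inter> {p. c (fst p, snd p, n) \<omega>} = T" by (auto simp: T)
  then have den: "real (card T) = (\<Sum>p\<in>est_steps j. access n p \<omega>)"
    by (simp add: access_def)
  have "real (card (est_steps j)) > 0"
    using est_steps_nonempty[OF j] by (simp add: card_gt_0_iff)
  then show ?thesis
    unfolding rbar_def T_def[symmetric] num den avg_def by (simp add: add_divide_distrib[symmetric])
qed

definition reward_bound :: real where
  "reward_bound = max 1 Umax"

definition deviation_rate :: "real \<Rightarrow> real" where
  "deviation_rate \<epsilon> = min (\<epsilon>\<^sup>2 / (2 * noise_proxy)) (2 * \<epsilon>\<^sup>2 / reward_bound\<^sup>2)"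

definition deviation_bound :: "nat \<Rightarrow> real \<Rightarrow> real" where
  "deviation_bound j \<epsilon> = 2 * exp (- (deviation_rate \<epsilon> * real (card (est_steps j))))"

lemma deviation_rate_pos: "\<epsilon> > 0 \<Longrightarrow> deviation_rate \<epsilon> > 0"
  using noise_proxy_pos by (simp add: deviation_rate_def reward_bound_def)

lemma subgaussian_avg_deviation:
  assumes j: "1 \<le> j" and eps: "\<epsilon> \<ge> 0"
    and ind: "indep_vars (\<lambda>_. borel) X UNIV"
    and mgf: "\<And>p l. integrable P (\<lambda>\<omega>. exp (l * X p \<omega>)) \<and>
                expectation (\<lambda>\<omega>. exp (l * X p \<omega>)) \<le> exp (l\<^sup>2 * noise_proxy / 2)"
  shows "prob {\<omega> \<in> space P. \<epsilon> \<le> \<bar>avg j X \<omega>\<bar>} \<le> deviation_bound j \<epsilon>"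
proof -
  define K where "K = real (card (est_steps j))"
  have "prob {\<omega> \<in> space P. \<epsilon> \<le> \<bar>avg j X \<omega>\<bar>} \<le> 2 * exp (- (\<epsilon>\<^sup>2 * K / (2 * noise_proxy)))"
    unfolding avg_def K_def
    by (rule subgaussian_average_deviation[OF finite_est_steps est_steps_nonempty[OF j]
          indep_vars_subset[OF ind] mgf noise_proxy_pos eps]) auto
  also have "\<dots> \<le> deviation_bound j \<epsilon>"
  proof -
    have "deviation_rate \<epsilon> * K \<le> \<epsilon>\<^sup>2 / (2 * noise_proxy) * K"
      by (intro mult_right_mono) (auto simp: deviation_rate_def K_def)
    then show ?thesis by (simp add: deviation_bound_def K_def)
  qed
  finally show ?thesis .
qed

lemma bounded_avg_deviation:
  assumes j: "1 \<le> j" and eps: "\<epsilon> \<ge> 0"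
    and ind: "indep_vars (\<lambda>_. borel) X UNIV"
    and range: "\<And>p \<omega>. \<omega> \<in> space P \<Longrightarrow> 0 \<le> X p \<omega> \<and> X p \<omega> \<le> reward_bound"
    and mean: "\<And>p. expectation (X p) = \<mu>"
  shows "prob {\<omega> \<in> space P. \<epsilon> \<le> \<bar>avg j X \<omega> - \<mu>\<bar>} \<le> deviation_bound j \<epsilon>"
proof -
  define K where "K = real (card (est_steps j))"
  have "prob {\<omega> \<in> space P. \<epsilon> \<le> \<bar>avg j X \<omega> - \<mu>\<bar>} \<le> 2 * exp (- (2 * \<epsilon>\<^sup>2 * K / (reward_bound - 0)\<^sup>2))"
    unfolding avg_def K_def
    by (rule bounded_average_deviation[OF finite_est_steps est_steps_nonempty[OF j]
          indep_vars_subset[OF ind] range _ mean eps]) (auto simp: reward_bound_def)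
  also have "\<dots> \<le> deviation_bound j \<epsilon>"
  proof -
    have "deviation_rate \<epsilon> * K \<le> 2 * \<epsilon>\<^sup>2 / reward_bound\<^sup>2 * K"
      by (intro mult_right_mono) (auto simp: deviation_rate_def K_def)
    then show ?thesis by (simp add: deviation_bound_def K_def)
  qed
  finally show ?thesis .
qed

definition accurate :: "nat \<Rightarrow> real \<Rightarrow> nat \<Rightarrow> 'a \<Rightarrow> bool" where
  "accurate j \<epsilon> n \<omega> \<longleftrightarrow>
     (\<forall>k\<in>{1..M}. \<bar>avg j (block_noise k n) \<omega>\<bar> < \<epsilon>) \<and>
     \<bar>avg j (access_share n) \<omega> - U n 1 * (1 - (1/2)^N) / real N\<bar> < \<epsilon> \<and>
     \<bar>avg j (access n) \<omega> - 1/2\<bar> < \<epsilon> \<and>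
     \<bar>avg j (access_noise n) \<omega>\<bar> < \<epsilon>"

lemma not_accurate_sets [measurable]: "{\<omega> \<in> space P. \<not> accurate j \<epsilon> n \<omega>} \<in> events"
  unfolding accurate_def by measurable

lemma access_share_range:
  assumes n: "n \<in> {1..N}"
  shows "0 \<le> access_share n p \<omega> \<and> access_share n p \<omega> \<le> reward_bound"
proof (cases "c (fst p, snd p, n) \<omega>")
  case True
  have U: "0 \<le> U n 1" "U n 1 \<le> Umax" using U_range[OF n, of 1] M_pos by auto
  have "n \<in> accessors (fst p) (snd p) \<omega>" and "finite (accessors (fst p) (snd p) \<omega>)"
    using n True by (simp_all add: accessors_def)
  then have "card (accessors (fst p) (snd p) \<omega>) > 0"
    by (auto simp: card_gt_0_iff)
  then have "real (card (accessors (fst p) (snd p) \<omega>)) \<ge> 1"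
    by linarith
  then have "U n 1 / real (card (accessors (fst p) (snd p) \<omega>)) \<le> U n 1"
    using U by (simp add: divide_le_eq mult_le_cancel_left1)
  then show ?thesis using True U by (simp add: access_share_def reward_bound_def)
qed (simp add: access_share_def reward_bound_def)

lemma prob_not_accurate:
  assumes j: "1 \<le> j" and eps: "\<epsilon> \<ge> 0" and n: "n \<in> {1..N}"
  shows "prob {\<omega> \<in> space P. \<not> accurate j \<epsilon> n \<omega>} \<le> (real M + 3) * deviation_bound j \<epsilon>"
proof -
  define E_noise where "E_noise k = {\<omega> \<in> space P. \<epsilon> \<le> \<bar>avg j (block_noise k n) \<omega>\<bar>}" for k
  define E_share where
    "E_share = {\<omega> \<in> space P. \<epsilon> \<le> \<bar>avg j (access_share n) \<omega> - U n 1 * (1 - (1/2)^N) / real N\<bar>}"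
  define E_access where "E_access = {\<omega> \<in> space P. \<epsilon> \<le> \<bar>avg j (access n) \<omega> - 1/2\<bar>}"
  define E_access_noise where "E_access_noise = {\<omega> \<in> space P. \<epsilon> \<le> \<bar>avg j (access_noise n) \<omega>\<bar>}"
  have events: "E_noise k \<in> events" "E_share \<in> events" "E_access \<in> events" "E_access_noise \<in> events" for k
    unfolding E_noise_def E_share_def E_access_def E_access_noise_def by measurable
  have "prob (E_noise k) \<le> deviation_bound j \<epsilon>" for k
    unfolding E_noise_def
    by (rule subgaussian_avg_deviation[OF j eps indep_block_noise]) (simp add: block_noise_def noise_mgf)
  moreover have "prob E_share \<le> deviation_bound j \<epsilon>"
    unfolding E_share_def
    by (rule bounded_avg_deviation[OF j eps indep_access_share access_share_range[OF n]])
       (unfold access_share_def[abs_def], rule expectation_access_share[OF n])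
  moreover have "prob E_access \<le> deviation_bound j \<epsilon>"
    unfolding E_access_def
    by (rule bounded_avg_deviation[OF j eps indep_access])
       (auto simp: access_def[abs_def] reward_bound_def expectation_coin)
  moreover have "prob E_access_noise \<le> deviation_bound j \<epsilon>"
    unfolding E_access_noise_def
    by (rule subgaussian_avg_deviation[OF j eps indep_access_noise]) (simp add: access_noise_def coin_noise_mgf)
  moreover have "prob (\<Union>k\<in>{1..M}. E_noise k) \<le> (\<Sum>k\<in>{1..M}. prob (E_noise k))"
    by (rule finite_measure_subadditive_finite) (auto intro: events)
  moreover have "{\<omega> \<in> space P. \<not> accurate j \<epsilon> n \<omega>} =
      (\<Union>k\<in>{1..M}. E_noise k) \<union> E_share \<union> E_access \<union> E_access_noise"
    by (auto simp: accurate_def E_noise_def E_share_def E_access_def E_access_noise_def not_less)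
  moreover have "prob ((\<Union>k\<in>{1..M}. E_noise k) \<union> E_share \<union> E_access \<union> E_access_noise)
      \<le> prob (\<Union>k\<in>{1..M}. E_noise k) + prob E_share + prob E_access + prob E_access_noise"
    by (intro order.trans[OF measure_Un_le] add_right_mono) (auto intro: events)
  ultimately have "prob {\<omega> \<in> space P. \<not> accurate j \<epsilon> n \<omega>} \<le>
      (\<Sum>k\<in>{1..M}. deviation_bound j \<epsilon>) + 3 * deviation_bound j \<epsilon>"
    using sum_mono[of "{1..M}" "\<lambda>k. prob (E_noise k)" "\<lambda>_. deviation_bound j \<epsilon>"] by auto
  then show ?thesis by (simp add: algebra_simps)
qed

lemma Umax_pos: "Umax > 0"
  using U_range[of 1 1] U1_pos[of 1] N_pos M_pos by force

definition min_share :: real where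
  "min_share = Min ((\<lambda>n. U n 1 / real N) ` {1..N})"

lemma min_share_pos: "min_share > 0"
proof -
  have "min_share \<in> (\<lambda>n. U n 1 / real N) ` {1..N}"
    unfolding min_share_def using N_pos by (intro Min_in) auto
  then show ?thesis using U1_pos N_pos by auto
qed

lemma min_share_le: "n \<in> {1..N} \<Longrightarrow> min_share \<le> U n 1 / real N"
  unfolding min_share_def by (intro Min_le) auto

definition Nhat_tolerance :: real where
  "Nhat_tolerance = min (min (1/4) (min_share / 2)) ((1/2)^N / 4 * min_share / (8 * (4 + 2 * Umax)))"

lemma Nhat_tolerance_pos: "Nhat_tolerance > 0"
  using min_share_pos Umax_pos by (simp add: Nhat_tolerance_def)

lemma Nhat_eq_N:
  assumes j: "1 \<le> j" and n: "n \<in> {1..N}"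
    and acc: "accurate j \<epsilon> n \<omega>" and eps: "\<epsilon> \<le> Nhat_tolerance"
  shows "Nhat N M U nu c j n \<omega> = int N"
proof -
  define a where "a = U n 1 / real N"
  define q :: real where "q = 1 - (1/2)^N"
  define e where "e = avg j (block_noise 1 n) \<omega>"
  define x where "x = avg j (access_share n) \<omega> - a * q"
  define y where "y = avg j (access n) \<omega> - 1/2"
  define z where "z = avg j (access_noise n) \<omega>"
  have errors: "\<bar>e\<bar> < \<epsilon>" "\<bar>x\<bar> < \<epsilon>" "\<bar>y\<bar> < \<epsilon>" "\<bar>z\<bar> < \<epsilon>"
    using acc M_pos by (auto simp: accurate_def e_def x_def y_def z_def a_def q_def)
  have "a \<le> U n 1"
    using N_pos U1_pos[OF n] by (simp add: a_def divide_le_eq mult_le_cancel_left1)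
  then have a_le: "a \<le> Umax"
    using U_range[OF n, of 1] M_pos by auto
  have "\<bar>((a * q + x + z) / (1/2 + y)) / (2 * (a + e)) - q\<bar> < (1/2)^N / 4"
    by (rule ratio_estimate_close[OF min_share_le[OF n, folded a_def] min_share_pos a_le _ _ _ _ _ errors])
       (use eps in \<open>auto simp: q_def Nhat_tolerance_def power_le_one\<close>)
  moreover have "UhatN N M U nu c j n 1 \<omega> = a + e"
    using UhatN_eq_avg[OF j, of 1 n \<omega>] M_pos by (simp add: a_def e_def)
  moreover have "rbar N M U nu c j n \<omega> = (a * q + x + z) / (1/2 + y)"
    by (simp add: rbar_eq_avg[OF j] x_def y_def z_def)
  ultimately show ?thesis
    unfolding Nhat_def by (intro round_log_half_eq) (simp add: q_def)
qed

lemma est_welfare_close: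
  assumes j: "1 \<le> j" and m: "m \<in> allocs N M"
    and Nhat: "\<And>n. n \<in> {1..N} \<Longrightarrow> Nhat N M U nu c j n \<omega> = int N"
    and acc: "\<And>n. n \<in> {1..N} \<Longrightarrow> accurate j \<epsilon> n \<omega>"
  shows "\<bar>est_welfare N M U nu c j \<omega> m - welfare N U m\<bar> < real N * real N * \<epsilon>"
proof -
  define e where "e n = avg j (block_noise (m n) n) \<omega>" for n
  have mn: "m n \<in> {1..M}" if "n \<in> {1..N}" for n
    using m that by (auto simp: allocs_def PiE_iff)
  have e: "\<bar>e n\<bar> < \<epsilon>" if "n \<in> {1..N}" for n
    using acc[OF that] mn[OF that] by (auto simp: accurate_def e_def)
  have term_error: "Uhat N M U nu c j n (m n) (load N m n) \<omega> - U n (m n) / real (load N m n) =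
        real N * e n / real (load N m n)" if n: "n \<in> {1..N}" for n
    using N_pos by (simp add: Uhat_def Nhat[OF n] UhatN_eq_avg[OF j mn[OF n]] e_def
        diff_divide_distrib[symmetric] distrib_left)
  have "\<bar>est_welfare N M U nu c j \<omega> m - welfare N U m\<bar> = \<bar>\<Sum>n=1..N. real N * e n / real (load N m n)\<bar>"
    by (simp add: est_welfare_def welfare_def sum_subtractf[symmetric] term_error)
  also have "\<dots> \<le> (\<Sum>n=1..N. \<bar>real N * e n / real (load N m n)\<bar>)"
    by (rule sum_abs)
  also have "\<dots> < (\<Sum>n=1..N. real N * \<epsilon>)"
  proof (rule sum_strict_mono)
    fix n assume n: "n \<in> {1..N}"
    have load: "real (load N m n) \<ge> 1"
      using load_pos[OF n, of m] by simp
    have "\<bar>real N * e n / real (load N m n)\<bar> = real N * \<bar>e n\<bar> / real (load N m n)"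
      by (simp add: abs_mult abs_div)
    also have "\<dots> \<le> real N * \<bar>e n\<bar>"
      using load by (simp add: divide_le_eq mult_left_mono[OF load, of "real N * \<bar>e n\<bar>", simplified])
    also have "\<dots> < real N * \<epsilon>"
      using e[OF n] N_pos by simp
    finally show "\<bar>real N * e n / real (load N m n)\<bar> < real N * \<epsilon>" .
  qed (use N_pos in auto)
  finally show ?thesis by simp
qed

lemma est_welfare_optimal_wins:
  assumes j: "1 \<le> j" and mstar: "mstar \<in> allocs N M"
    and gap: "\<And>m. m \<in> allocs N M - {mstar} \<Longrightarrow> welfare N U m + \<Delta> \<le> welfare N U mstar"
    and eps: "\<epsilon> \<le> Nhat_tolerance" "2 * (real N * real N * \<epsilon>) \<le> \<Delta>"
    and acc: "\<And>n. n \<in> {1..N} \<Longrightarrow> accurate j \<epsilon> n \<omega>"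
    and m: "m \<in> allocs N M" "m \<noteq> mstar"
  shows "est_welfare N M U nu c j \<omega> m < est_welfare N M U nu c j \<omega> mstar"
proof -
  have Nhat: "Nhat N M U nu c j n \<omega> = int N" if "n \<in> {1..N}" for n
    using Nhat_eq_N[OF j that acc[OF that] eps(1)] .
  show ?thesis
    using est_welfare_close[OF j m(1) Nhat acc] est_welfare_close[OF j mstar Nhat acc] gap[of m] m eps(2)
    by auto
qed

lemma prob_misidentified_le:
  assumes mstar_alloc: "mstar \<in> allocs N M"
    and mstar_unique: "\<And>m. m \<in> allocs N M \<Longrightarrow> m \<noteq> mstar \<Longrightarrow> welfare N U m < welfare N U mstar"
  obtains C r where "r > 0" and
    "\<And>j. 1 \<le> j \<Longrightarrow> prob {\<omega> \<in> space P. \<exists>m \<in> allocs N M. m \<noteq> mstar \<and>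
              est_welfare N M U nu c j \<omega> mstar \<le> est_welfare N M U nu c j \<omega> m}
            \<le> C * exp (- (r * (real j * (real j + 1) / 2)))"
proof -
  have "finite (allocs N M - {mstar})"
    by (simp add: allocs_def finite_PiE)
  then obtain \<Delta> where \<Delta>: "\<Delta> > 0" "\<And>m. m \<in> allocs N M - {mstar} \<Longrightarrow> welfare N U m + \<Delta> \<le> welfare N U mstar"
    using mstar_unique
    by (elim finite_strict_upper_bound_gap[where f = "welfare N U" and a = "welfare N U mstar"]) blast+
  define \<epsilon> where "\<epsilon> = min Nhat_tolerance (\<Delta> / (2 * (real N * real N)))"
  have eps_pos: "\<epsilon> > 0"
    using Nhat_tolerance_pos \<Delta>(1) N_pos by (simp add: \<epsilon>_def)
  have eps: "\<epsilon> \<le> Nhat_tolerance" "2 * (real N * real N * \<epsilon>) \<le> \<Delta>"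
    using N_pos by (auto simp: \<epsilon>_def min_def field_simps)
  have "prob {\<omega> \<in> space P. \<exists>m \<in> allocs N M. m \<noteq> mstar \<and>
              est_welfare N M U nu c j \<omega> mstar \<le> est_welfare N M U nu c j \<omega> m}
        \<le> (2 * real N * (real M + 3)) * exp (- (deviation_rate \<epsilon> * (real j * (real j + 1) / 2)))"
    if j: "1 \<le> j" for j
  proof -
    have "{\<omega> \<in> space P. \<exists>m \<in> allocs N M. m \<noteq> mstar \<and>
              est_welfare N M U nu c j \<omega> mstar \<le> est_welfare N M U nu c j \<omega> m}
          \<subseteq> (\<Union>n\<in>{1..N}. {\<omega> \<in> space P. \<not> accurate j \<epsilon> n \<omega>})"
      using est_welfare_optimal_wins[OF j mstar_alloc \<Delta>(2) eps] by force
    then have "prob {\<omega> \<in> space P. \<exists>m \<in> allocs N M. m \<noteq> mstar \<and>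
              est_welfare N M U nu c j \<omega> mstar \<le> est_welfare N M U nu c j \<omega> m}
          \<le> prob (\<Union>n\<in>{1..N}. {\<omega> \<in> space P. \<not> accurate j \<epsilon> n \<omega>})"
      by (intro finite_measure_mono) auto
    also have "\<dots> \<le> (\<Sum>n\<in>{1..N}. prob {\<omega> \<in> space P. \<not> accurate j \<epsilon> n \<omega>})"
      by (rule finite_measure_subadditive_finite) auto
    also have "\<dots> \<le> (\<Sum>n\<in>{1..N}. (real M + 3) * deviation_bound j \<epsilon>)"
      using eps_pos by (intro sum_mono prob_not_accurate[OF j]) auto
    also have "\<dots> = (2 * real N * (real M + 3)) * exp (- (deviation_rate \<epsilon> * (real j * (real j + 1) / 2)))"
      by (simp add: deviation_bound_def card_est_steps)
    finally show ?thesis .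
  qed
  with deviation_rate_pos[OF eps_pos] show ?thesis
    using that by blast
qed

end

theorem lemma4:
  fixes P :: "'a measure"
    and N M :: nat
    and U :: "nat \<Rightarrow> nat \<Rightarrow> real"
    and Umax b :: real
    and nu :: "nat \<times> nat \<times> nat \<times> nat \<Rightarrow> 'a \<Rightarrow> real"
    and c :: "nat \<times> nat \<times> nat \<Rightarrow> 'a \<Rightarrow> bool"
    and mstar :: "nat \<Rightarrow> nat"
  assumes "prob_space P"
    and "1 \<le> N" and "1 \<le> M"
    and U_range: "\<And>n m. n \<in> {1..N} \<Longrightarrow> m \<in> {1..M} \<Longrightarrow> 0 \<le> U n m \<and> U n m \<le> Umax"
    and U1_pos: "\<And>n. n \<in> {1..N} \<Longrightarrow> 0 < U n 1"
    and mstar_alloc: "mstar \<in> allocs N M"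
    and mstar_unique: "\<And>m. m \<in> allocs N M \<Longrightarrow> m \<noteq> mstar \<Longrightarrow> welfare N U m < welfare N U mstar"
    and noise_subg: "\<And>x. subgaussian P (nu x) b"
    and noise_ident: "\<And>x y. distr P borel (nu x) = distr P borel (nu y)"
    and coin_meas: "\<And>y. c y \<in> measurable P (count_space UNIV)"
    and coin_fair: "\<And>y. prob_space.prob P {\<omega> \<in> space P. c y \<omega>} = 1 / 2"
    and all_indep: "prob_space.indep_vars P (\<lambda>_. borel)
          (case_sum nu (\<lambda>y \<omega>. of_bool (c y \<omega>) :: real)) UNIV"
  shows "(\<lambda>j. prob_space.prob P {\<omega> \<in> space P. \<exists>m \<in> allocs N M. m \<noteq> mstar \<and>
              est_welfare N M U nu c j \<omega> mstar \<le> est_welfare N M U nu c j \<omega> m})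
         \<in> O(\<lambda>j. exp (- (real j powr 1.4)))"
proof -
  interpret ene_estimation P N M U Umax b nu c
    unfolding ene_estimation_def ene_estimation_axioms_def using assms by blast
  obtain C r where r: "r > 0" and bound:
    "\<And>j. 1 \<le> j \<Longrightarrow> prob {\<omega> \<in> space P. \<exists>m \<in> allocs N M. m \<noteq> mstar \<and>
              est_welfare N M U nu c j \<omega> mstar \<le> est_welfare N M U nu c j \<omega> m}
            \<le> C * exp (- (r * (real j * (real j + 1) / 2)))"
    using prob_misidentified_le[OF mstar_alloc mstar_unique] by blast
  have "(\<lambda>j. prob {\<omega> \<in> space P. \<exists>m \<in> allocs N M. m \<noteq> mstar \<and>
              est_welfare N M U nu c j \<omega> mstar \<le> est_welfare N M U nu c j \<omega> m})
        \<in> O(\<lambda>j. exp (- (r * (real j * (real j + 1) / 2))))"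
    using bound by (intro bigoI[where c = C] eventually_mono[OF eventually_ge_at_top[of 1]]) auto
  also have "(\<lambda>j. exp (- (r * (real j * (real j + 1) / 2)))) \<in> O(\<lambda>j. exp (- (real j powr 1.4)))"
    by (rule exp_neg_quadratic_bigo[OF r])
  finally show ?thesis .
qed

end
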